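(* Let $L$ be a Lie algebra over a field $K$ of characteristic $\neq 2$ such that $\mathrm{HomLie}(L)$ is closed with respect to the anticommutator $\varphi * \psi = \frac12(\varphi\circ\psi+\psi\circ\varphi)$, and regard $\mathrm{HomLie}(L)$ as a Jordan algebra with this product. Then: (i) $L$ is homomorphically mapped to the Lie algebra $\mathrm{Der}(\mathrm{HomLie}(L))$ of derivations of this Jordan algebra; (ii) the automorphism group $\mathrm{Aut}(L)$ is homomorphically mapped to the automorphism group $\mathrm{Aut}(\mathrm{HomLie}(L))$ of this Jordan algebra.
   Context: A Hom-Lie structure on a Lie algebra $L$ is a linear map $\varphi: L \to L$ satisfying $[[x,y],\varphi(z)] + [[z,x],\varphi(y)] + [[y,z],\varphi(x)] = 0$ for all $x,y,z \in L$. $\mathrm{HomLie}(L)$ is the vector space of all Hom-Lie structures on $L$. *)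

theory Defs
  imports Main "HOL.Vector_Spaces"
begin

definition lie_algebra :: "('k::field \<Rightarrow> 'a::ab_group_add \<Rightarrow> 'a) \<Rightarrow> ('a \<Rightarrow> 'a \<Rightarrow> 'a) \<Rightarrow> bool" where
  "lie_algebra scale br \<longleftrightarrow> vector_space scale
     \<and> (\<forall>x. Vector_Spaces.linear scale scale (br x))
     \<and> (\<forall>y. Vector_Spaces.linear scale scale (\<lambda>x. br x y))
     \<and> (\<forall>x. br x x = 0)
     \<and> (\<forall>x y z. br x (br y z) + br y (br z x) + br z (br x y) = 0)"

definition HomLie :: "('k::field \<Rightarrow> 'a::ab_group_add \<Rightarrow> 'a) \<Rightarrow> ('a \<Rightarrow> 'a \<Rightarrow> 'a) \<Rightarrow> ('a \<Rightarrow> 'a) set" where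
  "HomLie scale br = {\<phi>. Vector_Spaces.linear scale scale \<phi> \<and>
     (\<forall>x y z. br (br x y) (\<phi> z) + br (br z x) (\<phi> y) + br (br y z) (\<phi> x) = 0)}"

definition jprod :: "('k::field \<Rightarrow> 'a::ab_group_add \<Rightarrow> 'a) \<Rightarrow> ('a \<Rightarrow> 'a) \<Rightarrow> ('a \<Rightarrow> 'a) \<Rightarrow> ('a \<Rightarrow> 'a)" where
  "jprod scale \<phi> \<psi> = (\<lambda>v. scale (inverse 2) (\<phi> (\<psi> v) + \<psi> (\<phi> v)))"

definition jordan_derivation :: "('k::field \<Rightarrow> 'a::ab_group_add \<Rightarrow> 'a) \<Rightarrow> ('a \<Rightarrow> 'a) set \<Rightarrow> (('a \<Rightarrow> 'a) \<Rightarrow> ('a \<Rightarrow> 'a)) \<Rightarrow> bool" where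
  "jordan_derivation scale J D \<longleftrightarrow>
     (\<forall>\<phi>\<in>J. D \<phi> \<in> J)
     \<and> (\<forall>\<phi>\<in>J. \<forall>\<psi>\<in>J. D (\<lambda>v. \<phi> v + \<psi> v) = (\<lambda>v. D \<phi> v + D \<psi> v))
     \<and> (\<forall>c. \<forall>\<phi>\<in>J. D (\<lambda>v. scale c (\<phi> v)) = (\<lambda>v. scale c (D \<phi> v)))
     \<and> (\<forall>\<phi>\<in>J. \<forall>\<psi>\<in>J. D (jprod scale \<phi> \<psi>) = (\<lambda>v. jprod scale (D \<phi>) \<psi> v + jprod scale \<phi> (D \<psi>) v))"

definition jordan_automorphism :: "('k::field \<Rightarrow> 'a::ab_group_add \<Rightarrow> 'a) \<Rightarrow> ('a \<Rightarrow> 'a) set \<Rightarrow> (('a \<Rightarrow> 'a) \<Rightarrow> ('a \<Rightarrow> 'a)) \<Rightarrow> bool" where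
  "jordan_automorphism scale J A \<longleftrightarrow>
     bij_betw A J J
     \<and> (\<forall>\<phi>\<in>J. \<forall>\<psi>\<in>J. A (\<lambda>v. \<phi> v + \<psi> v) = (\<lambda>v. A \<phi> v + A \<psi> v))
     \<and> (\<forall>c. \<forall>\<phi>\<in>J. A (\<lambda>v. scale c (\<phi> v)) = (\<lambda>v. scale c (A \<phi> v)))
     \<and> (\<forall>\<phi>\<in>J. \<forall>\<psi>\<in>J. A (jprod scale \<phi> \<psi>) = jprod scale (A \<phi>) (A \<psi>))"

definition lie_automorphism :: "('k::field \<Rightarrow> 'a::ab_group_add \<Rightarrow> 'a) \<Rightarrow> ('a \<Rightarrow> 'a \<Rightarrow> 'a) \<Rightarrow> ('a \<Rightarrow> 'a) \<Rightarrow> bool" where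
  "lie_automorphism scale br g \<longleftrightarrow> bij g \<and> Vector_Spaces.linear scale scale g
     \<and> (\<forall>x y. g (br x y) = br (g x) (g y))"

text \<open>The natural map x |-> [ad x, -] from L to Der(HomLie(L)).\<close>
definition theta :: "('a::ab_group_add \<Rightarrow> 'a \<Rightarrow> 'a) \<Rightarrow> 'a \<Rightarrow> ('a \<Rightarrow> 'a) \<Rightarrow> ('a \<Rightarrow> 'a)" where
  "theta br x \<phi> = (\<lambda>v. br x (\<phi> v) - \<phi> (br x v))"

definition conjug :: "('a \<Rightarrow> 'a) \<Rightarrow> ('a \<Rightarrow> 'a) \<Rightarrow> ('a \<Rightarrow> 'a)" where
  "conjug g \<phi> = g \<circ> \<phi> \<circ> inv g"

end

theory Submission
  imports Defs
begin

text \<open>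
  Measure the failure of \<open>\<phi>\<close> to be a Hom-Lie structure by the cyclic sum
  \<open>D\<^sub>\<phi>(a,b,c) = [[a,b],\<phi> c] + [[c,a],\<phi> b] + [[b,c],\<phi> a]\<close>. Since \<open>ad x\<close> is a
  derivation of \<open>L\<close>, the defect of \<open>\<theta>\<^sub>x \<phi> = [ad x, \<phi>]\<close> is \<open>ad x\<close> applied to
  \<open>D\<^sub>\<phi>\<close> minus \<open>D\<^sub>\<phi>\<close> with \<open>ad x\<close> inserted in each slot, so \<open>\<theta>\<^sub>x\<close> preserves
  \<open>HomLie(L)\<close>; likewise conjugation by an automorphism \<open>g\<close> transports \<open>D\<^sub>\<phi>\<close> along \<open>g\<close>.
  A commutator \<open>[ad x, -]\<close> is a derivation and a conjugation \<open>g (-) g\<^sup>-\<^sup>1\<close> an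
  automorphism of the associative algebra of linear maps, hence of its anticommutator; and
  \<open>x \<mapsto> [ad x, -]\<close> is a Lie homomorphism because \<open>ad\<close> is one. None of this uses
  that \<open>HomLie(L)\<close> is closed under the Jordan product or that \<open>2 \<noteq> 0\<close>: the derivation
  and automorphism identities hold for all linear maps.
\<close>

definition homlie_defect :: "('a::ab_group_add \<Rightarrow> 'a \<Rightarrow> 'a) \<Rightarrow> ('a \<Rightarrow> 'a) \<Rightarrow> 'a \<Rightarrow> 'a \<Rightarrow> 'a \<Rightarrow> 'a" where
  "homlie_defect br \<phi> x y z = br (br x y) (\<phi> z) + br (br z x) (\<phi> y) + br (br y z) (\<phi> x)"

lemma HomLie_iff:
  "\<phi> \<in> HomLie scale br \<longleftrightarrow>
     Vector_Spaces.linear scale scale \<phi> \<and> (\<forall>x y z. homlie_defect br \<phi> x y z = 0)"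
  by (simp add: HomLie_def homlie_defect_def)

lemma HomLie_linear: "\<phi> \<in> HomLie scale br \<Longrightarrow> Vector_Spaces.linear scale scale \<phi>"
  by (simp add: HomLie_def)

lemma conjug_comp:
  assumes "bij g" "bij h"
  shows "conjug (g \<circ> h) \<phi> = conjug g (conjug h \<phi>)"
  using assms by (simp add: conjug_def o_inv_distrib o_assoc)

lemma conjug_inv_conjug:
  assumes "bij g"
  shows "conjug (inv g) (conjug g \<phi>) = \<phi>"
  using assms by (simp add: conjug_def fun_eq_iff bij_is_inj inv_inv_eq)

lemma conjug_fun_add:
  assumes "Vector_Spaces.linear scale scale g"
  shows "conjug g (\<lambda>v. \<phi> v + \<psi> v) = (\<lambda>v. conjug g \<phi> v + conjug g \<psi> v)"
  using assms by (simp add: conjug_def linear_iff fun_eq_iff)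

lemma conjug_fun_scale:
  assumes "Vector_Spaces.linear scale scale g"
  shows "conjug g (\<lambda>v. scale c (\<phi> v)) = (\<lambda>v. scale c (conjug g \<phi> v))"
  using assms by (simp add: conjug_def linear_iff fun_eq_iff)

lemma conjug_jprod:
  assumes "Vector_Spaces.linear scale scale g" "inj g"
  shows "conjug g (jprod scale \<phi> \<psi>) = jprod scale (conjug g \<phi>) (conjug g \<psi>)"
  using assms by (simp add: conjug_def jprod_def linear_iff fun_eq_iff)

locale lie_alg =
  fixes scale :: "'k::field \<Rightarrow> 'a::ab_group_add \<Rightarrow> 'a"
    and br :: "'a \<Rightarrow> 'a \<Rightarrow> 'a"
  assumes lie_algebra: "lie_algebra scale br"
begin

sublocale vector_space scale
  using lie_algebra by (simp add: lie_algebra_def)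

sublocale vector_space_pair scale scale ..

lemma linear_br_right: "Vector_Spaces.linear scale scale (br x)"
  using lie_algebra by (simp add: lie_algebra_def)

lemma linear_br_left: "Vector_Spaces.linear scale scale (\<lambda>x. br x y)"
  using lie_algebra by (simp add: lie_algebra_def)

lemma br_add_right: "br x (y + z) = br x y + br x z"
  by (rule linear_add[OF linear_br_right])

lemma br_diff_right: "br x (y - z) = br x y - br x z"
  by (rule linear_diff[OF linear_br_right])

lemma br_scale_right: "br x (scale c y) = scale c (br x y)"
  by (rule linear_scale[OF linear_br_right])

lemma br_add_left: "br (x + y) z = br x z + br y z"
  using linear_add[OF linear_br_left] .

lemma br_scale_left: "br (scale c x) y = scale c (br x y)"
  using linear_scale[OF linear_br_left] .

lemma br_self: "br x x = 0"
  using lie_algebra by (simp add: lie_algebra_def)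

lemma br_anticomm: "br y x = - br x y"
proof -
  have "br y x + br x y = 0"
    using br_self[of "x + y"] unfolding br_add_left br_add_right by (simp add: br_self)
  then show ?thesis
    by (simp add: eq_neg_iff_add_eq_0)
qed

lemma br_jacobi: "br x (br y z) + br y (br z x) + br z (br x y) = 0"
  using lie_algebra by (simp add: lie_algebra_def)

lemma br_leibniz: "br x (br y z) = br (br x y) z + br y (br x z)"
  using br_jacobi[of x y z] br_anticomm[of z x] br_anticomm[of z "br x y"]
    linear_neg[OF linear_br_right]
  by (simp add: algebra_simps)

lemma homlie_defect_theta:
  "homlie_defect br (theta br x \<phi>) a b c =
     br x (homlie_defect br \<phi> a b c)
     - (homlie_defect br \<phi> (br x a) b c + homlie_defect br \<phi> a (br x b) c
        + homlie_defect br \<phi> a b (br x c))"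
  by (simp add: homlie_defect_def theta_def br_diff_right br_add_right br_add_left
      br_leibniz[of x] algebra_simps)

lemma linear_theta:
  assumes "Vector_Spaces.linear scale scale \<phi>"
  shows "Vector_Spaces.linear scale scale (theta br x \<phi>)"
  unfolding linear_iff theta_def
  by (simp add: linear_add[OF assms] linear_scale[OF assms] br_add_right br_scale_right
      scale_right_diff_distrib vector_space_axioms)

lemma theta_HomLie:
  assumes "\<phi> \<in> HomLie scale br"
  shows "theta br x \<phi> \<in> HomLie scale br"
  using assms
  by (simp add: HomLie_iff linear_theta homlie_defect_theta linear_0[OF linear_br_right])

lemma theta_fun_add: "theta br x (\<lambda>v. \<phi> v + \<psi> v) = (\<lambda>v. theta br x \<phi> v + theta br x \<psi> v)"
  by (simp add: theta_def br_add_right algebra_simps)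

lemma theta_fun_scale: "theta br x (\<lambda>v. scale c (\<phi> v)) = (\<lambda>v. scale c (theta br x \<phi> v))"
  by (simp add: theta_def br_scale_right scale_right_diff_distrib)

lemma theta_comp:
  assumes "Vector_Spaces.linear scale scale \<phi>"
  shows "theta br x (\<phi> \<circ> \<psi>) = (\<lambda>v. theta br x \<phi> (\<psi> v) + \<phi> (theta br x \<psi> v))"
  by (simp add: theta_def linear_diff[OF assms] fun_eq_iff)

lemma theta_jprod:
  assumes "Vector_Spaces.linear scale scale \<phi>" "Vector_Spaces.linear scale scale \<psi>"
  shows "theta br x (jprod scale \<phi> \<psi>) =
    (\<lambda>v. jprod scale (theta br x \<phi>) \<psi> v + jprod scale \<phi> (theta br x \<psi>) v)"
proof -
  have "theta br x (jprod scale \<phi> \<psi>) =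
      (\<lambda>v. scale (inverse 2) (theta br x (\<phi> \<circ> \<psi>) v + theta br x (\<psi> \<circ> \<phi>) v))"
    by (simp add: jprod_def theta_def br_scale_right br_add_right scale_right_distrib
        scale_right_diff_distrib algebra_simps)
  also have "\<dots> = (\<lambda>v. jprod scale (theta br x \<phi>) \<psi> v + jprod scale \<phi> (theta br x \<psi>) v)"
    by (simp add: theta_comp assms jprod_def scale_right_distrib algebra_simps)
  finally show ?thesis .
qed

lemma jordan_derivation_theta: "jordan_derivation scale (HomLie scale br) (theta br x)"
  by (simp add: jordan_derivation_def theta_HomLie theta_fun_add theta_fun_scale theta_jprod
      HomLie_linear)

lemma theta_add:
  assumes "Vector_Spaces.linear scale scale \<phi>"
  shows "theta br (x + y) \<phi> = (\<lambda>v. theta br x \<phi> v + theta br y \<phi> v)"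
  by (simp add: theta_def br_add_left linear_add[OF assms] algebra_simps)

lemma theta_scale:
  assumes "Vector_Spaces.linear scale scale \<phi>"
  shows "theta br (scale c x) \<phi> = (\<lambda>v. scale c (theta br x \<phi> v))"
  by (simp add: theta_def br_scale_left linear_scale[OF assms] scale_right_diff_distrib)

lemma theta_br:
  assumes "Vector_Spaces.linear scale scale \<phi>"
  shows "theta br (br x y) \<phi> = (\<lambda>v. theta br x (theta br y \<phi>) v - theta br y (theta br x \<phi>) v)"
proof -
  have ad_br: "br (br x y) w = br x (br y w) - br y (br x w)" for w
    by (simp add: br_leibniz[of x y w])
  show ?thesis
    by (simp add: theta_def ad_br br_diff_right linear_diff[OF assms] algebra_simps)
qed

lemma lie_automorphism_inv:
  assumes "lie_automorphism scale br g"
  shows "lie_automorphism scale br (inv g)"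
proof -
  have g: "bij g" "Vector_Spaces.linear scale scale g" "\<And>x y. g (br x y) = br (g x) (g y)"
    using assms by (auto simp: lie_automorphism_def)
  have "Vector_Spaces.linear scale scale (inv g)"
    using g(1,2) by (metis bij_module_hom_imp_inv_module_hom module_hom_iff_linear)
  moreover have "inv g (br x y) = br (inv g x) (inv g y)" for x y
  proof -
    have "g (br (inv g x) (inv g y)) = br x y"
      using g by (simp add: bij_is_surj surj_f_inv_f)
    then show ?thesis
      using g(1) by (metis bij_is_inj inv_f_eq)
  qed
  ultimately show ?thesis
    using g(1) by (simp add: lie_automorphism_def bij_imp_bij_inv)
qed

lemma homlie_defect_conjug:
  assumes "lie_automorphism scale br g"
  shows "homlie_defect br (conjug g \<phi>) a b c =
    g (homlie_defect br \<phi> (inv g a) (inv g b) (inv g c))"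
  using assms
  by (simp add: lie_automorphism_def homlie_defect_def conjug_def linear_add bij_is_surj
      surj_f_inv_f)

lemma conjug_HomLie:
  assumes g: "lie_automorphism scale br g" and "\<phi> \<in> HomLie scale br"
  shows "conjug g \<phi> \<in> HomLie scale br"
proof -
  have "Vector_Spaces.linear scale scale (conjug g \<phi>)"
    unfolding conjug_def
    using g lie_automorphism_inv[OF g] HomLie_linear[OF assms(2)]
    by (metis Vector_Spaces.linear_compose lie_automorphism_def)
  moreover have "homlie_defect br (conjug g \<phi>) a b c = 0" for a b c
    using assms by (simp add: homlie_defect_conjug HomLie_iff linear_0 lie_automorphism_def)
  ultimately show ?thesis
    by (simp add: HomLie_iff)
qed

lemma jordan_automorphism_conjug:
  assumes g: "lie_automorphism scale br g"
  shows "jordan_automorphism scale (HomLie scale br) (conjug g)"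
proof -
  have "bij g" "Vector_Spaces.linear scale scale g"
    using g by (auto simp: lie_automorphism_def)
  have "bij_betw (conjug g) (HomLie scale br) (HomLie scale br)"
  proof (rule bij_betw_byWitness[where f' = "conjug (inv g)"])
    show "\<forall>\<phi>\<in>HomLie scale br. conjug (inv g) (conjug g \<phi>) = \<phi>"
      using \<open>bij g\<close> by (simp add: conjug_inv_conjug)
    show "\<forall>\<phi>\<in>HomLie scale br. conjug g (conjug (inv g) \<phi>) = \<phi>"
      using conjug_inv_conjug[OF bij_imp_bij_inv[OF \<open>bij g\<close>]] \<open>bij g\<close>
      by (simp add: inv_inv_eq)
    show "conjug g ` HomLie scale br \<subseteq> HomLie scale br"
      using conjug_HomLie[OF g] by blast
    show "conjug (inv g) ` HomLie scale br \<subseteq> HomLie scale br"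
      using conjug_HomLie[OF lie_automorphism_inv[OF g]] by blast
  qed
  then show ?thesis
    using \<open>bij g\<close> \<open>Vector_Spaces.linear scale scale g\<close>
    by (simp add: jordan_automorphism_def conjug_fun_add conjug_fun_scale conjug_jprod bij_is_inj)
qed

end

theorem proposition2p6:
  fixes scale :: "'k::field \<Rightarrow> 'a::ab_group_add \<Rightarrow> 'a"
    and br :: "'a \<Rightarrow> 'a \<Rightarrow> 'a"
  assumes lie: "lie_algebra scale br"
    and char: "(2::'k) \<noteq> 0"
    and closed: "\<forall>\<phi>\<in>HomLie scale br. \<forall>\<psi>\<in>HomLie scale br. jprod scale \<phi> \<psi> \<in> HomLie scale br"
  shows "(\<forall>x. jordan_derivation scale (HomLie scale br) (theta br x))
    \<and> (\<forall>x y. \<forall>\<phi>\<in>HomLie scale br. theta br (x + y) \<phi> = (\<lambda>v. theta br x \<phi> v + theta br y \<phi> v))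
    \<and> (\<forall>c x. \<forall>\<phi>\<in>HomLie scale br. theta br (scale c x) \<phi> = (\<lambda>v. scale c (theta br x \<phi> v)))
    \<and> (\<forall>x y. \<forall>\<phi>\<in>HomLie scale br.
          theta br (br x y) \<phi> = (\<lambda>v. theta br x (theta br y \<phi>) v - theta br y (theta br x \<phi>) v))
    \<and> (\<forall>g. lie_automorphism scale br g \<longrightarrow> jordan_automorphism scale (HomLie scale br) (conjug g))
    \<and> (\<forall>g h. lie_automorphism scale br g \<longrightarrow> lie_automorphism scale br h \<longrightarrow>
          (\<forall>\<phi>\<in>HomLie scale br. conjug (g \<circ> h) \<phi> = conjug g (conjug h \<phi>)))"
proof -
  interpret lie_alg scale br
    by (rule lie_alg.intro[OF lie])
  have "bij g" if "lie_automorphism scale br g" for g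
    using that by (simp add: lie_automorphism_def)
  then show ?thesis
    by (simp add: jordan_derivation_theta theta_add theta_scale theta_br HomLie_linear
        jordan_automorphism_conjug conjug_comp)
qed

end
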